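(* Let $G_0$ be a non-abelian finite simple group and let $(G_n)_{n\geq1}$ be a sequence of finite groups such that every finite group is isomorphic to a subgroup of at least one $G_n$. Then the family of all finite groups $\Gamma$ that are extensions of $G_0^N$ by $G_n$ (indexed by $n\ge1$ and $N\ge1$) satisfies property (RÉAL): for every finite group $G$ there exist integers $n\ge1$, $N\ge1$, a group $\Gamma$ fitting in an exact sequence $1\to G_0^N\to\Gamma\to G_n\to1$, and a subgroup $H\le\Gamma$ with $N_\Gamma(H)/H\cong G$.
   Context: A group $\Gamma$ is called an extension of a group $N$ by a group $H$ if there is an exact sequence $1\to N\to\Gamma\to H\to1$. A family $\{\Gamma_i\}_{i}$ of finite groups satisfies property (RÉAL) if for every finite group $G$ there exist an index $i$ and a subgroup $H$ of $\Gamma_i$ with $N_{\Gamma_i}(H)/H\cong G$, where $N_{\Gamma_i}(H)$ is the normalizer of $H$ in $\Gamma_i$. *)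

theory Defs
  imports "HOL-Algebra.Algebra"
begin

definition is_extension ::
  "('g, 'm) monoid_scheme \<Rightarrow> ('n, 'k) monoid_scheme \<Rightarrow> ('q, 'l) monoid_scheme \<Rightarrow> bool" where
  "is_extension Gamma Nn Q \<longleftrightarrow> group Gamma \<and>
     (\<exists>i p. i \<in> hom Nn Gamma \<and> inj_on i (carrier Nn) \<and>
            p \<in> hom Gamma Q \<and> p ` carrier Gamma = carrier Q \<and>
            i ` carrier Nn = kernel Gamma Q p)"

definition power_group :: "('a, 'm) monoid_scheme \<Rightarrow> nat \<Rightarrow> (nat \<Rightarrow> 'a) monoid" where
  "power_group G0 N = product_group {..<N} (\<lambda>_. G0)"

end

theory Submission
  imports Defs
begin

text \<open>
  Embed \<open>G\<close> as a subgroup \<open>S\<close> of some finite \<open>B = Gs n\<close>, and let \<open>M\<close> be a proper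
  self-normalizing subgroup of \<open>G0\<close>: a proper subgroup of maximal order works, since its
  normalizer is \<open>M\<close> or \<open>G0\<close>, and the latter would make \<open>M\<close> a trivial normal subgroup and
  \<open>G0\<close> cyclic. The regular wreath product \<open>\<Gamma>\<close> of \<open>G0\<close> by \<open>B\<close> (pairs \<open>(f, b)\<close> with
  \<open>f : B \<rightarrow> G0\<close>) is an extension of \<open>G0\<^bsup>|B|\<^esup>\<close> by \<open>B\<close>. Let \<open>H = (\<Prod>k. F k) \<times> 1\<close> with
  \<open>F k = G0\<close> for \<open>k \<in> S\<close> and \<open>F k = M\<close> otherwise. Conjugation by \<open>(f, b)\<close> maps \<open>H\<close> to
  \<open>(\<Prod>k. f k \<cdot> F (b\<inverse>k) \<cdot> (f k)\<inverse>) \<times> 1\<close>, so \<open>(f, b)\<close> normalizes \<open>H\<close> iff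
  \<open>f k \<cdot> F (b\<inverse>k) \<cdot> (f k)\<inverse> = F k\<close> for all \<open>k\<close>. At \<open>k = b\<close> this forces \<open>b \<in> S\<close>, as \<open>M\<close> is
  proper; then \<open>F (b\<inverse>k) = F k\<close> and self-normalization gives \<open>f k \<in> F k\<close>. Hence
  \<open>N\<^sub>\<Gamma>(H) = (\<Prod>k. F k) \<times> S\<close> and \<open>N\<^sub>\<Gamma>(H)/H \<cong> S \<cong> G\<close>.
\<close>

lemma normalizer_eq_conj_image:
  assumes "H \<subseteq> carrier G"
  shows "normalizer G H = {g \<in> carrier G. (\<lambda>h. g \<otimes>\<^bsub>G\<^esub> h \<otimes>\<^bsub>G\<^esub> inv\<^bsub>G\<^esub> g) ` H = H}"
proof -
  have "g <#\<^bsub>G\<^esub> H #>\<^bsub>G\<^esub> x = (\<lambda>h. g \<otimes>\<^bsub>G\<^esub> h \<otimes>\<^bsub>G\<^esub> x) ` H" for g x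
    unfolding l_coset_def r_coset_def by auto
  then show ?thesis
    using assms unfolding normalizer_def stabilizer_def by auto
qed

lemma (in group) conj_image_carrier:
  assumes "g \<in> carrier G"
  shows "(\<lambda>h. g \<otimes> h \<otimes> inv g) ` carrier G = carrier G"
proof (intro equalityI subsetI)
  fix x assume "x \<in> carrier G"
  then have "x = g \<otimes> (inv g \<otimes> x \<otimes> g) \<otimes> inv g" and "inv g \<otimes> x \<otimes> g \<in> carrier G"
    using assms by (simp_all add: m_assoc flip: m_assoc[of g "inv g"])
  then show "x \<in> (\<lambda>h. g \<otimes> h \<otimes> inv g) ` carrier G" by blast
qed (use assms in auto)

lemma (in group) subgroup_subset_normalizer: "subgroup K G \<Longrightarrow> K \<subseteq> normalizer G K"
  using subgroup_in_normalizer normal_imp_subgroup subgroup.subset by force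

lemma (in group) conj_image_subgroup_self:
  assumes "subgroup K G" and "g \<in> K"
  shows "(\<lambda>h. g \<otimes> h \<otimes> inv g) ` K = K"
  using assms subgroup_subset_normalizer normalizer_eq_conj_image[OF subgroup.subset[OF assms(1)]] by blast

lemma (in group) cyclic_if_proper_subgroups_trivial:
  assumes fin: "finite (carrier G)" and nontriv: "carrier G \<noteq> {\<one>}"
    and triv: "\<And>K. subgroup K G \<Longrightarrow> K \<noteq> carrier G \<Longrightarrow> card K \<le> 1"
  shows "cyclic_group G"
proof -
  obtain x where x: "x \<in> carrier G" "x \<noteq> \<one>" using nontriv one_closed by blast
  have "generate G {x} = carrier G"
  proof (rule ccontr)
    assume "generate G {x} \<noteq> carrier G"
    then have "card (generate G {x}) \<le> 1" using triv generate_is_subgroup x(1) by simp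
    moreover have "finite (generate G {x})"
      using fin generate_incl[of "{x}"] x(1) finite_subset by blast
    moreover have "{\<one>, x} \<subseteq> generate G {x}"
      using generate.one generate.incl[of x "{x}"] by blast
    ultimately have "card {\<one>, x} \<le> 1" using card_mono le_trans by blast
    then show False using x(2) by simp
  qed
  then show ?thesis
    using x(1) unfolding cyclic_group_def subgroup_generated_def by (intro bexI[of _ x]) simp_all
qed

lemma (in simple_group) ex_self_normalizing_proper_subgroup:
  assumes fin: "finite (carrier G)" and noncomm: "\<not> comm_group G"
  shows "\<exists>M. subgroup M G \<and> M \<noteq> carrier G \<and> normalizer G M = M"
proof -
  define proper where "proper M \<longleftrightarrow> subgroup M G \<and> M \<noteq> carrier G" for M
  have "proper {\<one>}"
    using simple_not_triv triv_subgroup unfolding proper_def by auto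
  moreover have "card M < Suc (card (carrier G))" if "proper M" for M
    using that fin subgroup.subset card_mono unfolding proper_def by (metis le_imp_less_Suc)
  ultimately obtain M where M: "proper M" and max: "\<And>K. proper K \<Longrightarrow> card K \<le> card M"
    using ex_has_greatest_nat[of proper "{\<one>}" card] by metis
  have M_sub: "subgroup M G" and M_ne: "M \<noteq> carrier G" using M unfolding proper_def by auto
  have M_carr: "M \<subseteq> carrier G" using subgroup.subset[OF M_sub] .
  show ?thesis
  proof (cases "normalizer G M = carrier G")
    case False
    have N_sub: "subgroup (normalizer G M) G" using normalizer_imp_subgroup[OF M_carr] .
    then have "card (normalizer G M) \<le> card M" using max False unfolding proper_def by blast
    moreover have "finite (normalizer G M)" using N_sub fin subgroup.subset finite_subset by metis
    ultimately have "normalizer G M = M" using subgroup_subset_normalizer[OF M_sub] card_seteq by metis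
    then show ?thesis using M_sub M_ne by blast
  next
    case True
    have "M \<lhd> G"
      unfolding normal_inv_iff
    proof (intro conjI ballI M_sub)
      fix x h assume "x \<in> carrier G" and "h \<in> M"
      then show "x \<otimes> h \<otimes> inv x \<in> M"
        using True normalizer_eq_conj_image[OF M_carr] by blast
    qed
    then have "M = {\<one>}" using no_real_normal_subgroup M_ne by blast
    then have "cyclic_group G"
      using cyclic_if_proper_subgroups_trivial[OF fin simple_not_triv] max unfolding proper_def by simp
    then show ?thesis using cyclic_imp_abelian_group noncomm by blast
  qed
qed

lemma ex_iso_copy:
  fixes G :: "('a, 'm) monoid_scheme" and h :: "'a \<Rightarrow> 'b"
  assumes G: "group G" and inj: "inj_on h (carrier G)"
  shows "\<exists>T :: 'b monoid. h \<in> iso G T \<and> group T"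
proof -
  interpret group G by (rule G)
  define h' where "h' = inv_into (carrier G) h"
  define T :: "'b monoid" where "T = \<lparr>carrier = h ` carrier G, monoid.mult = (\<lambda>x y. h (h' x \<otimes>\<^bsub>G\<^esub> h' y)), one = h \<one>\<^bsub>G\<^esub>\<rparr>"
  have h'_h: "\<And>x. x \<in> carrier G \<Longrightarrow> h' (h x) = x" unfolding h'_def using inj by simp
  have iso: "h \<in> iso G T"
    using inj unfolding iso_def hom_def bij_betw_def T_def by (auto simp: h'_h)
  have "monoid T"
    apply (rule monoidI)
    unfolding T_def by (auto simp: h'_h m_assoc)
  then show ?thesis using iso iso_imp_group is_isoI by blast
qed

lemma ex_iso_nat_monoid:
  assumes "group G" and "finite (carrier G)"
  shows "\<exists>T :: nat monoid. G \<cong> T \<and> group T \<and> finite (carrier T)"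
proof -
  obtain h :: "_ \<Rightarrow> nat" where "inj_on h (carrier G)"
    using finite_imp_inj_to_nat_seg[OF assms(2)] by blast
  then obtain T :: "nat monoid" where T: "h \<in> iso G T" "group T"
    using ex_iso_copy[OF assms(1)] by blast
  then have "carrier T = h ` carrier G" by (simp add: iso_def bij_betw_def)
  then have "finite (carrier T)" using assms(2) by simp
  then show ?thesis using T is_isoI by blast
qed

lemma image_kernel_comp_iso:
  assumes "\<alpha> \<in> iso A B"
  shows "\<alpha> ` kernel A C (f \<circ> \<alpha>) = kernel B C f"
proof (intro equalityI subsetI)
  have \<alpha>: "\<alpha> ` carrier A = carrier B" using assms by (simp add: iso_def bij_betw_def)
  fix y
  show "y \<in> kernel B C f" if "y \<in> \<alpha> ` kernel A C (f \<circ> \<alpha>)"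
    using that \<alpha> unfolding kernel_def by auto
  show "y \<in> \<alpha> ` kernel A C (f \<circ> \<alpha>)" if y: "y \<in> kernel B C f"
  proof -
    obtain x where "x \<in> carrier A" "y = \<alpha> x" using y \<alpha> unfolding kernel_def by auto
    then show ?thesis using y unfolding kernel_def by auto
  qed
qed

lemma is_extension_iso:
  assumes ext: "is_extension W A Q" and T: "group T" and \<phi>: "\<phi> \<in> iso W T"
  shows "is_extension T A Q"
proof -
  have W: "group W" using ext unfolding is_extension_def by simp
  obtain i p where i: "i \<in> hom A W" "inj_on i (carrier A)" and p: "p \<in> hom W Q"
    and p_onto: "p ` carrier W = carrier Q" and ker: "i ` carrier A = kernel W Q p"
    using ext unfolding is_extension_def by blast
  define \<psi> where "\<psi> = inv_into (carrier W) \<phi>"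
  have \<psi>: "\<psi> \<in> iso T W" unfolding \<psi>_def using group.iso_set_sym[OF W \<phi>] .
  have \<phi>_inj: "inj_on \<phi> (carrier W)" using \<phi> by (simp add: iso_def bij_betw_def)
  have \<psi>_onto: "\<psi> ` carrier T = carrier W" using \<psi> by (simp add: iso_def bij_betw_def)
  have \<psi>_\<phi>: "\<psi> (\<phi> x) = x" if "x \<in> carrier W" for x
    unfolding \<psi>_def using \<phi>_inj that by simp
  have "i ` carrier A \<subseteq> carrier W" using i(1) unfolding hom_def by auto
  then have i': "inj_on (\<phi> \<circ> i) (carrier A)"
    using comp_inj_on[OF i(2) inj_on_subset[OF \<phi>_inj]] by simp
  have p': "(p \<circ> \<psi>) ` carrier T = carrier Q"
    using p_onto \<psi>_onto by (metis image_comp)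
  have "kernel W Q (p \<circ> \<psi> \<circ> \<phi>) = kernel W Q p"
    unfolding kernel_def using \<psi>_\<phi> by (simp cong: conj_cong)
  then have ker': "(\<phi> \<circ> i) ` carrier A = kernel T Q (p \<circ> \<psi>)"
    using image_kernel_comp_iso[OF \<phi>, of Q "p \<circ> \<psi>"] ker by (metis image_comp)
  have "\<phi> \<circ> i \<in> hom A T" "p \<circ> \<psi> \<in> hom T Q"
    using hom_compose i(1) p \<phi> \<psi> unfolding iso_def by blast+
  with T i' p' ker' show ?thesis
    unfolding is_extension_def by blast
qed

lemma normalizer_iso_image:
  assumes W: "group W" and T: "group T" and \<phi>: "\<phi> \<in> iso W T" and H: "H \<subseteq> carrier W"
  shows "normalizer T (\<phi> ` H) = \<phi> ` normalizer W H"
proof -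
  interpret group_hom W T \<phi>
    using W T \<phi> unfolding group_hom_def group_hom_axioms_def iso_def by auto
  have inj: "inj_on \<phi> (carrier W)" and onto: "\<phi> ` carrier W = carrier T"
    using \<phi> unfolding iso_def bij_betw_def by auto
  have conj_sub: "(\<lambda>h. x \<otimes>\<^bsub>W\<^esub> h \<otimes>\<^bsub>W\<^esub> inv\<^bsub>W\<^esub> x) ` H \<subseteq> carrier W" if "x \<in> carrier W" for x
    using that H by auto
  have "(\<lambda>h. \<phi> x \<otimes>\<^bsub>T\<^esub> h \<otimes>\<^bsub>T\<^esub> inv\<^bsub>T\<^esub> (\<phi> x)) ` \<phi> ` H
      = \<phi> ` (\<lambda>h. x \<otimes>\<^bsub>W\<^esub> h \<otimes>\<^bsub>W\<^esub> inv\<^bsub>W\<^esub> x) ` H" if x: "x \<in> carrier W" for x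
    unfolding image_image
  proof (rule image_cong[OF refl])
    fix h assume "h \<in> H"
    then show "\<phi> x \<otimes>\<^bsub>T\<^esub> \<phi> h \<otimes>\<^bsub>T\<^esub> inv\<^bsub>T\<^esub> (\<phi> x) = \<phi> (x \<otimes>\<^bsub>W\<^esub> h \<otimes>\<^bsub>W\<^esub> inv\<^bsub>W\<^esub> x)"
      using x H by (auto simp: hom_mult hom_inv)
  qed
  then have conj_iff: "(\<lambda>h. \<phi> x \<otimes>\<^bsub>T\<^esub> h \<otimes>\<^bsub>T\<^esub> inv\<^bsub>T\<^esub> (\<phi> x)) ` \<phi> ` H = \<phi> ` H
      \<longleftrightarrow> (\<lambda>h. x \<otimes>\<^bsub>W\<^esub> h \<otimes>\<^bsub>W\<^esub> inv\<^bsub>W\<^esub> x) ` H = H" if "x \<in> carrier W" for x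
    using inj_on_image_eq_iff[OF inj conj_sub[OF that] H] that by simp
  have \<phi>H: "\<phi> ` H \<subseteq> carrier T" using H onto by blast
  show ?thesis
  proof (intro equalityI subsetI)
    fix y assume y: "y \<in> normalizer T (\<phi> ` H)"
    then have "y \<in> \<phi> ` carrier W" using onto normalizer_eq_conj_image[OF \<phi>H] by simp
    then obtain x where x: "x \<in> carrier W" "y = \<phi> x" by blast
    then show "y \<in> \<phi> ` normalizer W H"
      using y conj_iff normalizer_eq_conj_image[OF \<phi>H] normalizer_eq_conj_image[OF H] by auto
  next
    fix y assume "y \<in> \<phi> ` normalizer W H"
    then obtain x where x: "x \<in> normalizer W H" "y = \<phi> x" by blast
    then show "y \<in> normalizer T (\<phi> ` H)"
      using conj_iff onto normalizer_eq_conj_image[OF \<phi>H] normalizer_eq_conj_image[OF H] by auto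
  qed
qed

lemma normalizer_quotient_iso:
  assumes W: "group W" and T: "group T" and \<phi>: "\<phi> \<in> iso W T" and H: "subgroup H W"
    and Q: "group Q" and \<pi>: "\<pi> \<in> hom (W\<lparr>carrier := normalizer W H\<rparr>) Q"
    and \<pi>_onto: "\<pi> ` normalizer W H = carrier Q"
    and \<pi>_ker: "kernel (W\<lparr>carrier := normalizer W H\<rparr>) Q \<pi> = H"
  shows "(T\<lparr>carrier := normalizer T (\<phi> ` H)\<rparr>) Mod (\<phi> ` H) \<cong> Q"
proof -
  let ?N\<^sub>W = "W\<lparr>carrier := normalizer W H\<rparr>" and ?N\<^sub>T = "T\<lparr>carrier := normalizer T (\<phi> ` H)\<rparr>"
  have H_carr: "H \<subseteq> carrier W" using subgroup.subset[OF H] .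
  have "subgroup (normalizer W H) W" using group.normalizer_imp_subgroup[OF W H_carr] .
  then have N\<^sub>W: "group ?N\<^sub>W" using group.subgroup_imp_group[OF W] by blast
  have "\<phi> ` H \<subseteq> carrier T" using H_carr \<phi> by (auto simp: iso_def bij_betw_def)
  then have N\<^sub>T: "group ?N\<^sub>T" using group.subgroup_imp_group[OF T group.normalizer_imp_subgroup[OF T]] by blast
  define \<beta> where "\<beta> = restrict \<phi> (normalizer W H)"
  have \<beta>: "\<beta> \<in> iso ?N\<^sub>W ?N\<^sub>T"
    using iso_restrict[OF \<phi> W T \<open>subgroup (normalizer W H) W\<close>]
    unfolding \<beta>_def normalizer_iso_image[OF W T \<phi> H_carr] .
  define \<gamma> where "\<gamma> = inv_into (carrier ?N\<^sub>W) \<beta>"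
  have \<gamma>: "\<gamma> \<in> iso ?N\<^sub>T ?N\<^sub>W" unfolding \<gamma>_def using group.iso_set_sym[OF N\<^sub>W \<beta>] .
  have \<gamma>_\<beta>: "\<gamma> (\<beta> x) = x" if "x \<in> normalizer W H" for x
    using \<beta> that unfolding \<gamma>_def iso_def bij_betw_def by simp
  interpret \<chi>: group_hom ?N\<^sub>T Q "\<pi> \<circ> \<gamma>"
    using N\<^sub>T Q hom_compose[OF _ \<pi>] \<gamma> unfolding group_hom_def group_hom_axioms_def iso_def by blast
  have "\<gamma> ` carrier ?N\<^sub>T = normalizer W H" using \<gamma> unfolding iso_def bij_betw_def by simp
  then have "(\<pi> \<circ> \<gamma>) ` carrier ?N\<^sub>T = carrier Q" using \<pi>_onto by (metis image_comp)
  then have "?N\<^sub>T Mod kernel ?N\<^sub>T Q (\<pi> \<circ> \<gamma>) \<cong> Q" using \<chi>.FactGroup_iso by blast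
  moreover have "kernel ?N\<^sub>W Q (\<pi> \<circ> \<gamma> \<circ> \<beta>) = H"
    using \<pi>_ker \<gamma>_\<beta> unfolding kernel_def by (simp cong: conj_cong)
  then have "kernel ?N\<^sub>T Q (\<pi> \<circ> \<gamma>) = \<beta> ` H"
    using image_kernel_comp_iso[OF \<beta>] by metis
  moreover have "\<beta> ` H = \<phi> ` H"
    using \<pi>_ker unfolding \<beta>_def kernel_def by auto
  ultimately show ?thesis by simp
qed

lemma PiE_reindex_image:
  assumes \<sigma>: "bij_betw \<sigma> I I"
  shows "(\<lambda>c. \<lambda>k\<in>I. g k (c (\<sigma> k))) ` (\<Pi>\<^sub>E k\<in>I. A k) = (\<Pi>\<^sub>E k\<in>I. g k ` A (\<sigma> k))"
proof (intro equalityI subsetI)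
  fix d assume "d \<in> (\<lambda>c. \<lambda>k\<in>I. g k (c (\<sigma> k))) ` (\<Pi>\<^sub>E k\<in>I. A k)"
  then obtain c where c: "c \<in> (\<Pi>\<^sub>E k\<in>I. A k)" and d: "d = (\<lambda>k\<in>I. g k (c (\<sigma> k)))" by blast
  have "c (\<sigma> k) \<in> A (\<sigma> k)" if "k \<in> I" for k
    using c bij_betw_apply[OF \<sigma> that] by blast
  then show "d \<in> (\<Pi>\<^sub>E k\<in>I. g k ` A (\<sigma> k))" unfolding d by simp
next
  fix d assume d: "d \<in> (\<Pi>\<^sub>E k\<in>I. g k ` A (\<sigma> k))"
  define a where "a k = (SOME y. y \<in> A (\<sigma> k) \<and> g k y = d k)" for k
  have a: "a k \<in> A (\<sigma> k) \<and> g k (a k) = d k" if "k \<in> I" for k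
  proof -
    have "d k \<in> g k ` A (\<sigma> k)" using PiE_mem[OF d that] .
    then have "\<exists>y. y \<in> A (\<sigma> k) \<and> g k y = d k" by (auto simp: image_iff)
    then show ?thesis unfolding a_def by (rule someI_ex)
  qed
  define c where "c = (\<lambda>j\<in>I. a (inv_into I \<sigma> j))"
  have \<sigma>_inv: "inv_into I \<sigma> (\<sigma> k) = k" if "k \<in> I" for k
    using bij_betw_inv_into_left[OF \<sigma> that] .
  have c: "c \<in> (\<Pi>\<^sub>E k\<in>I. A k)"
  proof -
    have "a (inv_into I \<sigma> j) \<in> A j" if "j \<in> I" for j
      using a[OF bij_betw_apply[OF bij_betw_inv_into[OF \<sigma>] that]] \<sigma> that
      by (simp add: bij_betw_inv_into_right)
    then show ?thesis unfolding c_def by (simp only: restrict_PiE_iff) blast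
  qed
  have "d = (\<lambda>k\<in>I. g k (c (\<sigma> k)))"
  proof
    fix k show "d k = (\<lambda>k\<in>I. g k (c (\<sigma> k))) k"
    proof (cases "k \<in> I")
      case True
      then have "c (\<sigma> k) = a k" unfolding c_def using \<sigma>_inv[OF True] bij_betw_apply[OF \<sigma> True] by simp
      then show ?thesis using a[OF True] True by simp
    next
      case False
      then show ?thesis using PiE_arb[OF d False] by simp
    qed
  qed
  then show "d \<in> (\<lambda>c. \<lambda>k\<in>I. g k (c (\<sigma> k))) ` (\<Pi>\<^sub>E k\<in>I. A k)" using c by (rule image_eqI)
qed

locale regular_wreath = G0: group G0 + B: group B
  for G0 :: "'a monoid" and B :: "'b monoid" +
  fixes e :: "nat \<Rightarrow> 'b" and N :: nat
  assumes e: "bij_betw e {..<N} (carrier B)"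
begin

text \<open>\<open>B\<close> acts on the coordinates \<open>{..<N}\<close>, identified with \<open>carrier B\<close> through \<open>e\<close>,
  by left multiplication; \<open>wreath\<close> is the resulting regular wreath product.\<close>

definition act :: "'b \<Rightarrow> nat \<Rightarrow> nat" where
  "act b k = inv_into {..<N} e (b \<otimes>\<^bsub>B\<^esub> e k)"

lemma e_closed: "k < N \<Longrightarrow> e k \<in> carrier B"
  using bij_betw_apply[OF e] by simp

lemma act_closed: "b \<in> carrier B \<Longrightarrow> k < N \<Longrightarrow> act b k < N"
  unfolding act_def using bij_betw_apply[OF bij_betw_inv_into[OF e]] e_closed by simp

lemma e_act: "b \<in> carrier B \<Longrightarrow> k < N \<Longrightarrow> e (act b k) = b \<otimes>\<^bsub>B\<^esub> e k"
  unfolding act_def using bij_betw_inv_into_right[OF e] e_closed by simp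

lemma e_injD: "j < N \<Longrightarrow> k < N \<Longrightarrow> e j = e k \<Longrightarrow> j = k"
  using e unfolding bij_betw_def inj_on_def by blast

lemma act_one: "k < N \<Longrightarrow> act \<one>\<^bsub>B\<^esub> k = k"
  using e_injD act_closed e_act e_closed by simp

lemma act_mult:
  assumes "b \<in> carrier B" "c \<in> carrier B" "k < N"
  shows "act (b \<otimes>\<^bsub>B\<^esub> c) k = act b (act c k)"
  using assms by (intro e_injD) (simp_all add: act_closed e_act e_closed B.m_assoc)

lemma act_inv_act: "b \<in> carrier B \<Longrightarrow> k < N \<Longrightarrow> act (inv\<^bsub>B\<^esub> b) (act b k) = k"
  using act_mult[of "inv\<^bsub>B\<^esub> b" b k] act_one by simp

lemma act_act_inv: "b \<in> carrier B \<Longrightarrow> k < N \<Longrightarrow> act b (act (inv\<^bsub>B\<^esub> b) k) = k"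
  using act_mult[of b "inv\<^bsub>B\<^esub> b" k] act_one by simp

lemma bij_act: "b \<in> carrier B \<Longrightarrow> bij_betw (act b) {..<N} {..<N}"
  by (rule bij_betwI[of _ _ _ "act (inv\<^bsub>B\<^esub> b)"]) (auto simp: act_closed act_inv_act act_act_inv)

definition wreath :: "((nat \<Rightarrow> 'a) \<times> 'b) monoid" where
  "wreath = \<lparr>carrier = (\<Pi>\<^sub>E k\<in>{..<N}. carrier G0) \<times> carrier B,
        monoid.mult = (\<lambda>(f, b) (g, c). (\<lambda>k\<in>{..<N}. f k \<otimes>\<^bsub>G0\<^esub> g (act (inv\<^bsub>B\<^esub> b) k), b \<otimes>\<^bsub>B\<^esub> c)),
        one = (\<lambda>k\<in>{..<N}. \<one>\<^bsub>G0\<^esub>, \<one>\<^bsub>B\<^esub>)\<rparr>"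

lemma wreath_carrier: "carrier wreath = (\<Pi>\<^sub>E k\<in>{..<N}. carrier G0) \<times> carrier B"
  by (simp add: wreath_def)

lemma finite_wreath: "finite (carrier G0) \<Longrightarrow> finite (carrier B) \<Longrightarrow> finite (carrier wreath)"
  by (simp add: wreath_carrier finite_PiE)

lemma wreath_mult:
  "(f, b) \<otimes>\<^bsub>wreath\<^esub> (g, c) = (\<lambda>k\<in>{..<N}. f k \<otimes>\<^bsub>G0\<^esub> g (act (inv\<^bsub>B\<^esub> b) k), b \<otimes>\<^bsub>B\<^esub> c)"
  by (simp add: wreath_def)

lemma wreath_one: "\<one>\<^bsub>wreath\<^esub> = (\<lambda>k\<in>{..<N}. \<one>\<^bsub>G0\<^esub>, \<one>\<^bsub>B\<^esub>)"
  by (simp add: wreath_def)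

lemma wreath_left_inverse:
  assumes "f \<in> (\<Pi>\<^sub>E k\<in>{..<N}. carrier G0)" "b \<in> carrier B"
  shows "(\<lambda>k\<in>{..<N}. inv\<^bsub>G0\<^esub> (f (act b k)), inv\<^bsub>B\<^esub> b) \<in> carrier wreath"
    and "(\<lambda>k\<in>{..<N}. inv\<^bsub>G0\<^esub> (f (act b k)), inv\<^bsub>B\<^esub> b) \<otimes>\<^bsub>wreath\<^esub> (f, b) = \<one>\<^bsub>wreath\<^esub>"
proof -
  have f: "f (act b k) \<in> carrier G0" if "k < N" for k
    using assms act_closed that by (auto simp: PiE_iff)
  then show "(\<lambda>k\<in>{..<N}. inv\<^bsub>G0\<^esub> (f (act b k)), inv\<^bsub>B\<^esub> b) \<in> carrier wreath"
    using assms(2) by (simp add: wreath_carrier)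
  show "(\<lambda>k\<in>{..<N}. inv\<^bsub>G0\<^esub> (f (act b k)), inv\<^bsub>B\<^esub> b) \<otimes>\<^bsub>wreath\<^esub> (f, b) = \<one>\<^bsub>wreath\<^esub>"
    using f assms(2) by (simp add: wreath_mult wreath_one cong: restrict_cong)
qed

lemma wreath_assoc:
  assumes "x \<in> carrier wreath" "y \<in> carrier wreath" "z \<in> carrier wreath"
  shows "x \<otimes>\<^bsub>wreath\<^esub> y \<otimes>\<^bsub>wreath\<^esub> z = x \<otimes>\<^bsub>wreath\<^esub> (y \<otimes>\<^bsub>wreath\<^esub> z)"
proof -
  obtain f b g c h d where xyz: "x = (f, b)" "y = (g, c)" "z = (h, d)"
    and f: "f \<in> (\<Pi>\<^sub>E k\<in>{..<N}. carrier G0)" and g: "g \<in> (\<Pi>\<^sub>E k\<in>{..<N}. carrier G0)"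
    and h: "h \<in> (\<Pi>\<^sub>E k\<in>{..<N}. carrier G0)"
    and bcd: "b \<in> carrier B" "c \<in> carrier B" "d \<in> carrier B"
    using assms unfolding wreath_carrier by auto
  have "(\<lambda>k\<in>{..<N}. (\<lambda>k\<in>{..<N}. f k \<otimes>\<^bsub>G0\<^esub> g (act (inv\<^bsub>B\<^esub> b) k)) k
                      \<otimes>\<^bsub>G0\<^esub> h (act (inv\<^bsub>B\<^esub> (b \<otimes>\<^bsub>B\<^esub> c)) k))
      = (\<lambda>k\<in>{..<N}. f k \<otimes>\<^bsub>G0\<^esub> (\<lambda>k\<in>{..<N}. g k \<otimes>\<^bsub>G0\<^esub> h (act (inv\<^bsub>B\<^esub> c) k)) (act (inv\<^bsub>B\<^esub> b) k))"
  proof (rule restrict_ext)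
    fix k assume "k \<in> {..<N}"
    then have k: "k < N" and k': "act (inv\<^bsub>B\<^esub> b) k < N" and k'': "act (inv\<^bsub>B\<^esub> c) (act (inv\<^bsub>B\<^esub> b) k) < N"
      using act_closed bcd by auto
    have "act (inv\<^bsub>B\<^esub> (b \<otimes>\<^bsub>B\<^esub> c)) k = act (inv\<^bsub>B\<^esub> c) (act (inv\<^bsub>B\<^esub> b) k)"
      using bcd k by (simp add: B.inv_mult_group act_mult)
    moreover have "f k \<in> carrier G0" "g (act (inv\<^bsub>B\<^esub> b) k) \<in> carrier G0"
      "h (act (inv\<^bsub>B\<^esub> c) (act (inv\<^bsub>B\<^esub> b) k)) \<in> carrier G0"
      using f g h k k' k'' by (auto simp: PiE_iff)
    ultimately show "(\<lambda>k\<in>{..<N}. f k \<otimes>\<^bsub>G0\<^esub> g (act (inv\<^bsub>B\<^esub> b) k)) k \<otimes>\<^bsub>G0\<^esub> h (act (inv\<^bsub>B\<^esub> (b \<otimes>\<^bsub>B\<^esub> c)) k)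
      = f k \<otimes>\<^bsub>G0\<^esub> (\<lambda>k\<in>{..<N}. g k \<otimes>\<^bsub>G0\<^esub> h (act (inv\<^bsub>B\<^esub> c) k)) (act (inv\<^bsub>B\<^esub> b) k)"
      using k k' by (simp add: G0.m_assoc)
  qed
  then show ?thesis
    using bcd by (simp add: xyz wreath_mult B.m_assoc)
qed

lemma wreath_group: "group wreath"
proof (rule groupI)
  fix x y assume "x \<in> carrier wreath" "y \<in> carrier wreath"
  then show "x \<otimes>\<^bsub>wreath\<^esub> y \<in> carrier wreath"
    using act_closed by (auto simp: wreath_carrier wreath_mult PiE_iff)
next
  show "\<one>\<^bsub>wreath\<^esub> \<in> carrier wreath" by (auto simp: wreath_carrier wreath_one)
next
  fix x y z assume "x \<in> carrier wreath" "y \<in> carrier wreath" "z \<in> carrier wreath"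
  then show "x \<otimes>\<^bsub>wreath\<^esub> y \<otimes>\<^bsub>wreath\<^esub> z = x \<otimes>\<^bsub>wreath\<^esub> (y \<otimes>\<^bsub>wreath\<^esub> z)"
    by (rule wreath_assoc)
next
  fix x assume "x \<in> carrier wreath"
  then obtain f b where x: "x = (f, b)" and f: "f \<in> (\<Pi>\<^sub>E k\<in>{..<N}. carrier G0)" and b: "b \<in> carrier B"
    unfolding wreath_carrier by auto
  have "(\<lambda>k\<in>{..<N}. (\<lambda>k\<in>{..<N}. \<one>\<^bsub>G0\<^esub>) k \<otimes>\<^bsub>G0\<^esub> f (act (inv\<^bsub>B\<^esub> \<one>\<^bsub>B\<^esub>) k)) = f"
  proof
    fix k show "(\<lambda>k\<in>{..<N}. (\<lambda>k\<in>{..<N}. \<one>\<^bsub>G0\<^esub>) k \<otimes>\<^bsub>G0\<^esub> f (act (inv\<^bsub>B\<^esub> \<one>\<^bsub>B\<^esub>) k)) k = f k"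
      using f by (cases "k < N") (auto simp: act_one PiE_iff extensional_def)
  qed
  then show "\<one>\<^bsub>wreath\<^esub> \<otimes>\<^bsub>wreath\<^esub> x = x"
    using b by (simp add: x wreath_mult wreath_one)
  show "\<exists>y\<in>carrier wreath. y \<otimes>\<^bsub>wreath\<^esub> x = \<one>\<^bsub>wreath\<^esub>"
    using wreath_left_inverse[OF f b] x by blast
qed

lemma wreath_inv:
  assumes "f \<in> (\<Pi>\<^sub>E k\<in>{..<N}. carrier G0)" "b \<in> carrier B"
  shows "inv\<^bsub>wreath\<^esub> (f, b) = (\<lambda>k\<in>{..<N}. inv\<^bsub>G0\<^esub> (f (act b k)), inv\<^bsub>B\<^esub> b)"
  using group.inv_equality[OF wreath_group wreath_left_inverse(2)[OF assms]] wreath_left_inverse(1)[OF assms] assms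
  by (simp add: wreath_carrier)

lemma embed_hom: "(\<lambda>f. (f, \<one>\<^bsub>B\<^esub>)) \<in> hom (power_group G0 N) wreath"
proof (rule homI)
  fix f assume "f \<in> carrier (power_group G0 N)"
  then show "(f, \<one>\<^bsub>B\<^esub>) \<in> carrier wreath" by (simp add: power_group_def wreath_carrier)
next
  fix f g assume "f \<in> carrier (power_group G0 N)" "g \<in> carrier (power_group G0 N)"
  then show "(f \<otimes>\<^bsub>power_group G0 N\<^esub> g, \<one>\<^bsub>B\<^esub>) = (f, \<one>\<^bsub>B\<^esub>) \<otimes>\<^bsub>wreath\<^esub> (g, \<one>\<^bsub>B\<^esub>)"
    by (simp add: power_group_def wreath_mult act_one cong: restrict_cong)
qed

lemma wreath_is_extension: "is_extension wreath (power_group G0 N) B"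
  unfolding is_extension_def
proof (intro conjI wreath_group exI[of _ "\<lambda>f. (f, \<one>\<^bsub>B\<^esub>)"] exI[of _ snd] embed_hom)
  show "inj_on (\<lambda>f. (f, \<one>\<^bsub>B\<^esub>)) (carrier (power_group G0 N))"
    by (rule inj_onI) simp
  show "snd \<in> hom wreath B"
  proof (rule homI)
    fix x assume "x \<in> carrier wreath"
    then show "snd x \<in> carrier B" by (simp add: wreath_carrier mem_Times_iff)
  next
    fix x y :: "(nat \<Rightarrow> 'a) \<times> 'b"
    show "snd (x \<otimes>\<^bsub>wreath\<^esub> y) = snd x \<otimes>\<^bsub>B\<^esub> snd y"
      by (cases x, cases y) (simp add: wreath_mult)
  qed
  have "(\<lambda>k\<in>{..<N}. \<one>\<^bsub>G0\<^esub>) \<in> (\<Pi>\<^sub>E k\<in>{..<N}. carrier G0)" by simp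
  then have "(\<Pi>\<^sub>E k\<in>{..<N}. carrier G0) \<noteq> {}" by blast
  then show "snd ` carrier wreath = carrier B"
    unfolding wreath_carrier by (simp only: snd_image_times if_False)
  show "(\<lambda>f. (f, \<one>\<^bsub>B\<^esub>)) ` carrier (power_group G0 N) = kernel wreath B snd"
  proof (intro equalityI subsetI)
    fix x assume "x \<in> (\<lambda>f. (f, \<one>\<^bsub>B\<^esub>)) ` carrier (power_group G0 N)"
    then obtain f where f: "f \<in> carrier (power_group G0 N)" and x: "x = (f, \<one>\<^bsub>B\<^esub>)" by blast
    have "f \<in> (\<Pi>\<^sub>E k\<in>{..<N}. carrier G0)"
      using f by (simp only: power_group_def carrier_product_group)
    then have "x \<in> carrier wreath" unfolding x wreath_carrier by (intro SigmaI B.one_closed)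
    then show "x \<in> kernel wreath B snd" unfolding kernel_def using x by simp
  next
    fix x assume "x \<in> kernel wreath B snd"
    then have xc: "x \<in> (\<Pi>\<^sub>E k\<in>{..<N}. carrier G0) \<times> carrier B" and x: "snd x = \<one>\<^bsub>B\<^esub>"
      unfolding kernel_def wreath_carrier by simp_all
    from xc have "fst x \<in> carrier (power_group G0 N)"
      unfolding power_group_def carrier_product_group by (rule mem_Times_iff[THEN iffD1, THEN conjunct1])
    moreover have "x = (fst x, \<one>\<^bsub>B\<^esub>)" using x by (simp add: prod_eq_iff)
    ultimately show "x \<in> (\<lambda>f. (f, \<one>\<^bsub>B\<^esub>)) ` carrier (power_group G0 N)" by (metis image_eqI)
  qed
qed

lemma wreath_conj:
  assumes f: "f \<in> (\<Pi>\<^sub>E k\<in>{..<N}. carrier G0)" and b: "b \<in> carrier B"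
  shows "(f, b) \<otimes>\<^bsub>wreath\<^esub> (c, \<one>\<^bsub>B\<^esub>) \<otimes>\<^bsub>wreath\<^esub> inv\<^bsub>wreath\<^esub> (f, b)
       = (\<lambda>k\<in>{..<N}. f k \<otimes>\<^bsub>G0\<^esub> c (act (inv\<^bsub>B\<^esub> b) k) \<otimes>\<^bsub>G0\<^esub> inv\<^bsub>G0\<^esub> (f k), \<one>\<^bsub>B\<^esub>)"
proof -
  have "(\<lambda>k\<in>{..<N}. (\<lambda>k\<in>{..<N}. f k \<otimes>\<^bsub>G0\<^esub> c (act (inv\<^bsub>B\<^esub> b) k)) k \<otimes>\<^bsub>G0\<^esub>
           (\<lambda>k\<in>{..<N}. inv\<^bsub>G0\<^esub> (f (act b k))) (act (inv\<^bsub>B\<^esub> (b \<otimes>\<^bsub>B\<^esub> \<one>\<^bsub>B\<^esub>)) k))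
       = (\<lambda>k\<in>{..<N}. f k \<otimes>\<^bsub>G0\<^esub> c (act (inv\<^bsub>B\<^esub> b) k) \<otimes>\<^bsub>G0\<^esub> inv\<^bsub>G0\<^esub> (f k))"
  proof (rule restrict_ext)
    fix k assume "k \<in> {..<N}"
    then show "(\<lambda>k\<in>{..<N}. f k \<otimes>\<^bsub>G0\<^esub> c (act (inv\<^bsub>B\<^esub> b) k)) k \<otimes>\<^bsub>G0\<^esub>
           (\<lambda>k\<in>{..<N}. inv\<^bsub>G0\<^esub> (f (act b k))) (act (inv\<^bsub>B\<^esub> (b \<otimes>\<^bsub>B\<^esub> \<one>\<^bsub>B\<^esub>)) k)
         = f k \<otimes>\<^bsub>G0\<^esub> c (act (inv\<^bsub>B\<^esub> b) k) \<otimes>\<^bsub>G0\<^esub> inv\<^bsub>G0\<^esub> (f k)"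
      using b act_closed[of "inv\<^bsub>B\<^esub> b" k] by (simp add: act_act_inv)
  qed
  then show ?thesis using f b by (simp add: wreath_inv wreath_mult)
qed

end

locale wreath_normalizer = regular_wreath +
  fixes S :: "'b set" and M :: "'a set"
  assumes S: "subgroup S B" and M: "subgroup M G0" and M_proper: "M \<noteq> carrier G0"
    and M_self_normalizing: "normalizer G0 M = M"
begin

definition factor :: "nat \<Rightarrow> 'a set" where
  "factor k = (if e k \<in> S then carrier G0 else M)"

definition C :: "(nat \<Rightarrow> 'a) set" where
  "C = (\<Pi>\<^sub>E k\<in>{..<N}. factor k)"

definition H :: "((nat \<Rightarrow> 'a) \<times> 'b) set" where
  "H = (\<lambda>f. (f, \<one>\<^bsub>B\<^esub>)) ` C"

lemma factor_subgroup: "subgroup (factor k) G0"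
  unfolding factor_def using M G0.subgroup_self by simp

lemma factor_act:
  assumes b: "b \<in> S" and k: "k < N"
  shows "factor (act b k) = factor k"
proof -
  have b_carr: "b \<in> carrier B" using subgroup.mem_carrier[OF S b] .
  have "b \<otimes>\<^bsub>B\<^esub> e k \<in> S \<longleftrightarrow> e k \<in> S"
  proof
    assume "b \<otimes>\<^bsub>B\<^esub> e k \<in> S"
    then have "inv\<^bsub>B\<^esub> b \<otimes>\<^bsub>B\<^esub> (b \<otimes>\<^bsub>B\<^esub> e k) \<in> S"
      using subgroup.m_closed[OF S subgroup.m_inv_closed[OF S b]] by blast
    then show "e k \<in> S" using b_carr e_closed[OF k] by (simp add: B.m_assoc[symmetric])
  qed (use subgroup.m_closed[OF S b] in blast)
  then show ?thesis unfolding factor_def using e_act[OF b_carr k] by simp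
qed

lemma C_subgroup: "subgroup C (power_group G0 N)"
  unfolding C_def power_group_def
  using PiE_subgroup_product_group[of "{..<N}" "\<lambda>_. G0" factor] factor_subgroup G0.is_group by blast

lemma C_carrier: "C \<subseteq> (\<Pi>\<^sub>E k\<in>{..<N}. carrier G0)"
  using subgroup.subset[OF C_subgroup] by (simp add: power_group_def)

lemma H_subgroup: "subgroup H wreath"
proof -
  interpret group_hom "power_group G0 N" wreath "\<lambda>f. (f, \<one>\<^bsub>B\<^esub>)"
    using embed_hom wreath_group G0.is_group
    unfolding group_hom_def group_hom_axioms_def power_group_def by (simp add: product_group)
  show ?thesis unfolding H_def using subgroup_img_is_subgroup[OF C_subgroup] .
qed

lemma conj_image_H:
  assumes f: "f \<in> (\<Pi>\<^sub>E k\<in>{..<N}. carrier G0)" and b: "b \<in> carrier B"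
  shows "(\<lambda>h. (f, b) \<otimes>\<^bsub>wreath\<^esub> h \<otimes>\<^bsub>wreath\<^esub> inv\<^bsub>wreath\<^esub> (f, b)) ` H
       = (\<lambda>d. (d, \<one>\<^bsub>B\<^esub>)) ` (\<Pi>\<^sub>E k\<in>{..<N}. (\<lambda>y. f k \<otimes>\<^bsub>G0\<^esub> y \<otimes>\<^bsub>G0\<^esub> inv\<^bsub>G0\<^esub> (f k)) ` factor (act (inv\<^bsub>B\<^esub> b) k))"
proof -
  have "(\<lambda>h. (f, b) \<otimes>\<^bsub>wreath\<^esub> h \<otimes>\<^bsub>wreath\<^esub> inv\<^bsub>wreath\<^esub> (f, b)) ` H
      = (\<lambda>d. (d, \<one>\<^bsub>B\<^esub>)) ` (\<lambda>c. \<lambda>k\<in>{..<N}. f k \<otimes>\<^bsub>G0\<^esub> c (act (inv\<^bsub>B\<^esub> b) k) \<otimes>\<^bsub>G0\<^esub> inv\<^bsub>G0\<^esub> (f k)) ` C"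
    unfolding H_def image_image using wreath_conj[OF f b] by simp
  also have "(\<lambda>c. \<lambda>k\<in>{..<N}. f k \<otimes>\<^bsub>G0\<^esub> c (act (inv\<^bsub>B\<^esub> b) k) \<otimes>\<^bsub>G0\<^esub> inv\<^bsub>G0\<^esub> (f k)) ` C
      = (\<Pi>\<^sub>E k\<in>{..<N}. (\<lambda>y. f k \<otimes>\<^bsub>G0\<^esub> y \<otimes>\<^bsub>G0\<^esub> inv\<^bsub>G0\<^esub> (f k)) ` factor (act (inv\<^bsub>B\<^esub> b) k))"
    unfolding C_def using PiE_reindex_image[OF bij_act[OF B.inv_closed[OF b]],
        of "\<lambda>k y. f k \<otimes>\<^bsub>G0\<^esub> y \<otimes>\<^bsub>G0\<^esub> inv\<^bsub>G0\<^esub> (f k)" factor] .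
  finally show ?thesis .
qed

lemma mem_normalizer_H_iff:
  "(f, b) \<in> normalizer wreath H \<longleftrightarrow> f \<in> (\<Pi>\<^sub>E k\<in>{..<N}. carrier G0) \<and> b \<in> carrier B \<and>
     (\<forall>k\<in>{..<N}. (\<lambda>y. f k \<otimes>\<^bsub>G0\<^esub> y \<otimes>\<^bsub>G0\<^esub> inv\<^bsub>G0\<^esub> (f k)) ` factor (act (inv\<^bsub>B\<^esub> b) k) = factor k)"
proof -
  have H_carr: "H \<subseteq> carrier wreath" using subgroup.subset[OF H_subgroup] .
  have "(\<lambda>h. (f, b) \<otimes>\<^bsub>wreath\<^esub> h \<otimes>\<^bsub>wreath\<^esub> inv\<^bsub>wreath\<^esub> (f, b)) ` H = H \<longleftrightarrow>
        (\<forall>k\<in>{..<N}. (\<lambda>y. f k \<otimes>\<^bsub>G0\<^esub> y \<otimes>\<^bsub>G0\<^esub> inv\<^bsub>G0\<^esub> (f k)) ` factor (act (inv\<^bsub>B\<^esub> b) k) = factor k)"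
    if f: "f \<in> (\<Pi>\<^sub>E k\<in>{..<N}. carrier G0)" and b: "b \<in> carrier B"
  proof -
    have factor_ne: "factor k \<noteq> {}" for k using subgroup.one_closed[OF factor_subgroup] by blast
    have "inj (\<lambda>d. (d, \<one>\<^bsub>B\<^esub>))" by (rule injI) simp
    then have "(\<lambda>h. (f, b) \<otimes>\<^bsub>wreath\<^esub> h \<otimes>\<^bsub>wreath\<^esub> inv\<^bsub>wreath\<^esub> (f, b)) ` H = H \<longleftrightarrow>
        (\<Pi>\<^sub>E k\<in>{..<N}. (\<lambda>y. f k \<otimes>\<^bsub>G0\<^esub> y \<otimes>\<^bsub>G0\<^esub> inv\<^bsub>G0\<^esub> (f k)) ` factor (act (inv\<^bsub>B\<^esub> b) k)) = C"
      by (simp only: conj_image_H[OF f b]) (simp only: H_def inj_image_eq_iff[OF \<open>inj _\<close>])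
    also have "\<dots> \<longleftrightarrow> (\<forall>k\<in>{..<N}. (\<lambda>y. f k \<otimes>\<^bsub>G0\<^esub> y \<otimes>\<^bsub>G0\<^esub> inv\<^bsub>G0\<^esub> (f k)) ` factor (act (inv\<^bsub>B\<^esub> b) k) = factor k)"
      unfolding C_def by (rule PiE_eq_iff_not_empty) (simp_all add: factor_ne)
    finally show ?thesis .
  qed
  moreover have "(f, b) \<in> normalizer wreath H \<longleftrightarrow> f \<in> (\<Pi>\<^sub>E k\<in>{..<N}. carrier G0) \<and> b \<in> carrier B \<and>
      (\<lambda>h. (f, b) \<otimes>\<^bsub>wreath\<^esub> h \<otimes>\<^bsub>wreath\<^esub> inv\<^bsub>wreath\<^esub> (f, b)) ` H = H"
    unfolding normalizer_eq_conj_image[OF H_carr] wreath_carrier by simp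
  ultimately show ?thesis by blast
qed

lemma normalizer_H_snd:
  assumes "(f, b) \<in> normalizer wreath H"
  shows "b \<in> S"
proof (rule ccontr)
  assume b_S: "b \<notin> S"
  have b: "b \<in> carrier B" and f: "f \<in> (\<Pi>\<^sub>E k\<in>{..<N}. carrier G0)"
    using assms mem_normalizer_H_iff by auto
  \<comment> \<open>the coordinate \<open>k\<close> with \<open>e k = b\<close> would have to conjugate all of \<open>G0\<close> onto \<open>M\<close>\<close>
  obtain k where k: "k < N" "e k = b" using b bij_betw_imp_surj_on[OF e] by force
  have "e (act (inv\<^bsub>B\<^esub> b) k) = \<one>\<^bsub>B\<^esub>" using e_act[OF B.inv_closed[OF b] k(1)] k b by simp
  then have "factor (act (inv\<^bsub>B\<^esub> b) k) = carrier G0"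
    unfolding factor_def using subgroup.one_closed[OF S] by simp
  moreover have "factor k = M" unfolding factor_def using k b_S by simp
  moreover have "(\<lambda>y. f k \<otimes>\<^bsub>G0\<^esub> y \<otimes>\<^bsub>G0\<^esub> inv\<^bsub>G0\<^esub> (f k)) ` factor (act (inv\<^bsub>B\<^esub> b) k) = factor k"
    using assms mem_normalizer_H_iff k(1) by auto
  moreover have "f k \<in> carrier G0" using f k(1) by auto
  ultimately show False using G0.conj_image_carrier M_proper by simp
qed

lemma normalizer_H_fst:
  assumes "(f, b) \<in> normalizer wreath H"
  shows "f \<in> C"
proof -
  have f: "f \<in> (\<Pi>\<^sub>E k\<in>{..<N}. carrier G0)"
    and conj: "\<And>k. k < N \<Longrightarrow>
      (\<lambda>y. f k \<otimes>\<^bsub>G0\<^esub> y \<otimes>\<^bsub>G0\<^esub> inv\<^bsub>G0\<^esub> (f k)) ` factor (act (inv\<^bsub>B\<^esub> b) k) = factor k"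
    using assms mem_normalizer_H_iff by auto
  have b_S: "inv\<^bsub>B\<^esub> b \<in> S" using subgroup.m_inv_closed[OF S normalizer_H_snd[OF assms]] .
  have "f k \<in> factor k" if k: "k < N" for k
  proof (cases "e k \<in> S")
    case True
    then show ?thesis unfolding factor_def using f k by auto
  next
    case False
    then have "(\<lambda>y. f k \<otimes>\<^bsub>G0\<^esub> y \<otimes>\<^bsub>G0\<^esub> inv\<^bsub>G0\<^esub> (f k)) ` M = M"
      using conj[OF k] factor_act[OF b_S k] unfolding factor_def by simp
    then have "f k \<in> normalizer G0 M"
      using normalizer_eq_conj_image[OF subgroup.subset[OF M]] f k by auto
    then show ?thesis unfolding factor_def M_self_normalizing using False by simp
  qed
  then show "f \<in> C" unfolding C_def using f by (auto simp: PiE_iff)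
qed

lemma normalizer_H: "normalizer wreath H = C \<times> S"
proof (intro equalityI subsetI)
  fix x assume "x \<in> normalizer wreath H"
  then show "x \<in> C \<times> S" using normalizer_H_fst normalizer_H_snd by (cases x) auto
next
  fix x assume "x \<in> C \<times> S"
  then obtain f b where x: "x = (f, b)" and f: "f \<in> C" and b: "b \<in> S" by blast
  have "(\<lambda>y. f k \<otimes>\<^bsub>G0\<^esub> y \<otimes>\<^bsub>G0\<^esub> inv\<^bsub>G0\<^esub> (f k)) ` factor (act (inv\<^bsub>B\<^esub> b) k) = factor k" if k: "k < N" for k
  proof -
    have "f k \<in> factor k" using f k unfolding C_def by auto
    then show ?thesis
      using factor_act[OF subgroup.m_inv_closed[OF S b] k] G0.conj_image_subgroup_self[OF factor_subgroup]
      by simp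
  qed
  then show "x \<in> normalizer wreath H"
    unfolding x mem_normalizer_H_iff using f b C_carrier subgroup.mem_carrier[OF S] by auto
qed

lemma snd_normalizer_hom: "snd \<in> hom (wreath\<lparr>carrier := normalizer wreath H\<rparr>) (B\<lparr>carrier := S\<rparr>)"
proof (rule homI)
  fix x assume "x \<in> carrier (wreath\<lparr>carrier := normalizer wreath H\<rparr>)"
  then show "snd x \<in> carrier (B\<lparr>carrier := S\<rparr>)" by (auto simp: normalizer_H)
next
  fix x y :: "(nat \<Rightarrow> 'a) \<times> 'b"
  show "snd (x \<otimes>\<^bsub>wreath\<lparr>carrier := normalizer wreath H\<rparr>\<^esub> y) = snd x \<otimes>\<^bsub>B\<lparr>carrier := S\<rparr>\<^esub> snd y"
    by (cases x, cases y) (simp add: wreath_mult)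
qed

lemma snd_normalizer_onto: "snd ` normalizer wreath H = S"
proof -
  have "C \<noteq> {}" using subgroup.one_closed[OF C_subgroup] by blast
  then show ?thesis unfolding normalizer_H by (simp only: snd_image_times if_False)
qed

lemma kernel_snd_normalizer: "kernel (wreath\<lparr>carrier := normalizer wreath H\<rparr>) (B\<lparr>carrier := S\<rparr>) snd = H"
proof -
  have "kernel (wreath\<lparr>carrier := normalizer wreath H\<rparr>) (B\<lparr>carrier := S\<rparr>) snd = C \<times> {\<one>\<^bsub>B\<^esub>}"
    unfolding kernel_def normalizer_H using subgroup.one_closed[OF S] by auto
  also have "\<dots> = H" unfolding H_def by auto
  finally show ?thesis .
qed

end

lemma ex_extension_with_normalizer_quotient:
  fixes G0 :: "'a monoid" and B :: "'b monoid"
  assumes "simple_group G0" and "finite (carrier G0)" and "\<not> comm_group G0"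
    and B: "group B" and fin_B: "finite (carrier B)" and S: "subgroup S B"
  shows "\<exists>N\<ge>1. \<exists>\<Gamma> :: nat monoid. finite (carrier \<Gamma>) \<and> is_extension \<Gamma> (power_group G0 N) B \<and>
           (\<exists>H. subgroup H \<Gamma> \<and> (\<Gamma>\<lparr>carrier := normalizer \<Gamma> H\<rparr>) Mod H \<cong> B\<lparr>carrier := S\<rparr>)"
proof -
  obtain M where "subgroup M G0" "M \<noteq> carrier G0" "normalizer G0 M = M"
    using simple_group.ex_self_normalizing_proper_subgroup assms(1-3) by blast
  moreover obtain e where "bij_betw e {..<card (carrier B)} (carrier B)"
    using ex_bij_betw_nat_finite[OF fin_B] by (auto simp: atLeast0LessThan)
  ultimately interpret wreath_normalizer G0 B e "card (carrier B)" S M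
    using assms simple_group.axioms(1)
    by (simp add: wreath_normalizer_def wreath_normalizer_axioms_def regular_wreath_def regular_wreath_axioms_def)
  have "finite (carrier wreath)" using finite_wreath[OF assms(2) fin_B] .
  then obtain \<Gamma> :: "nat monoid" where "wreath \<cong> \<Gamma>" and \<Gamma>: "group \<Gamma>" "finite (carrier \<Gamma>)"
    using ex_iso_nat_monoid[OF wreath_group] by blast
  then obtain \<phi> where \<phi>: "\<phi> \<in> iso wreath \<Gamma>" unfolding is_iso_def by blast
  have "is_extension \<Gamma> (power_group G0 (card (carrier B))) B"
    using is_extension_iso[OF wreath_is_extension \<Gamma>(1) \<phi>] .
  moreover have "subgroup (\<phi> ` H) \<Gamma>"
    using group_hom.subgroup_img_is_subgroup[OF _ H_subgroup] wreath_group \<Gamma>(1) \<phi>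
    unfolding group_hom_def group_hom_axioms_def iso_def by blast
  moreover have "(\<Gamma>\<lparr>carrier := normalizer \<Gamma> (\<phi> ` H)\<rparr>) Mod (\<phi> ` H) \<cong> B\<lparr>carrier := S\<rparr>"
  proof (rule normalizer_quotient_iso[OF wreath_group \<Gamma>(1) \<phi> H_subgroup _ snd_normalizer_hom _ kernel_snd_normalizer])
    show "group (B\<lparr>carrier := S\<rparr>)" using B.subgroup_imp_group[OF S] .
    show "snd ` normalizer wreath H = carrier (B\<lparr>carrier := S\<rparr>)" using snd_normalizer_onto by simp
  qed
  moreover have "card (carrier B) \<ge> 1"
    using fin_B B.one_closed card_gt_0_iff[of "carrier B"] by (simp add: Suc_le_eq) blast
  ultimately show ?thesis using \<Gamma>(2) by blast
qed

theorem mainTheorem3: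
  fixes G0 :: "'a monoid" and Gs :: "nat \<Rightarrow> 'b monoid"
  assumes "simple_group G0" and "finite (carrier G0)" and "\<not> comm_group G0"
    and "\<And>n. n \<ge> 1 \<Longrightarrow> group (Gs n) \<and> finite (carrier (Gs n))"
    and "\<And>K :: nat monoid. group K \<Longrightarrow> finite (carrier K) \<Longrightarrow>
           (\<exists>n\<ge>1. \<exists>S. subgroup S (Gs n) \<and> K \<cong> (Gs n)\<lparr>carrier := S\<rparr>)"
  shows "\<And>G :: 'c monoid. group G \<Longrightarrow> finite (carrier G) \<Longrightarrow>
           (\<exists>n\<ge>1. \<exists>N\<ge>(1::nat). \<exists>Gamma :: nat monoid.
              finite (carrier Gamma) \<and> is_extension Gamma (power_group G0 N) (Gs n) \<and>
              (\<exists>H. subgroup H Gamma \<and>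
                   (Gamma\<lparr>carrier := normalizer Gamma H\<rparr>) Mod H \<cong> G))"
proof -
  fix G :: "'c monoid"
  assume G: "group G" "finite (carrier G)"
  then obtain K :: "nat monoid" where GK: "G \<cong> K" and K: "group K" "finite (carrier K)"
    using ex_iso_nat_monoid by blast
  then obtain n S where n: "n \<ge> 1" and S: "subgroup S (Gs n)" and "K \<cong> (Gs n)\<lparr>carrier := S\<rparr>"
    using assms(5) by blast
  then have "(Gs n)\<lparr>carrier := S\<rparr> \<cong> G" using group.iso_sym[OF G(1) iso_trans[OF GK]] by blast
  moreover have "group (Gs n)" "finite (carrier (Gs n))" using assms(4)[OF n] by auto
  then obtain N and \<Gamma> :: "nat monoid" and H
    where "N \<ge> 1" "finite (carrier \<Gamma>)" "is_extension \<Gamma> (power_group G0 N) (Gs n)"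
      "subgroup H \<Gamma>" "(\<Gamma>\<lparr>carrier := normalizer \<Gamma> H\<rparr>) Mod H \<cong> (Gs n)\<lparr>carrier := S\<rparr>"
    using ex_extension_with_normalizer_quotient[OF assms(1-3) _ _ S] by blast
  ultimately show "\<exists>n\<ge>1. \<exists>N\<ge>(1::nat). \<exists>Gamma :: nat monoid.
              finite (carrier Gamma) \<and> is_extension Gamma (power_group G0 N) (Gs n) \<and>
              (\<exists>H. subgroup H Gamma \<and> (Gamma\<lparr>carrier := normalizer Gamma H\<rparr>) Mod H \<cong> G)"
    using n iso_trans by blast
qed

end
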